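(* Let $\mathbb{X}^0_1=\mathbb{X}^1_1:=2^\omega$, $\mathbb{A}^0_1:=\{(0^\infty,0^\infty)\}$ and $\mathbb{A}^1_1:=\{(0^i1\alpha,0^i1\beta)\mid i\in\omega,\ \alpha,\beta\in2^\omega\}$. Let $X,Y$ be Polish spaces and $A_0,A_1$ disjoint subsets of $X\times Y$. Then exactly one of the following holds: (a) there is a countable union $S$ of sets $U\times V$ with $U$ open in $X$ and $V$ open in $Y$ such that $A_0\subseteq S$ and $S\cap A_1=\emptyset$; (b) there are continuous maps $f,g:2^\omega\to X,Y$ respectively (i.e. $f:2^\omega\to X$, $g:2^\omega\to Y$) such that $(f\times g)(\mathbb{A}^0_1)\subseteq A_0$ and $(f\times g)(\mathbb{A}^1_1)\subseteq A_1$.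
   Context: $0^i1\alpha$ denotes the element of $2^\omega$ consisting of $i$ zeros, then $1$, then $\alpha$; $0^\infty$ is the constant zero sequence. $(f\times g)(x,y)=(f(x),g(y))$. *)

theory Defs
  imports "HOL-Analysis.Analysis"
begin

definition cantor_space :: "(nat \<Rightarrow> bool) topology" where
  "cantor_space = product_topology (\<lambda>_. discrete_topology UNIV) UNIV"

text \<open>The sequence 0^i 1 alpha: i zeros, then 1, then alpha.\<close>
definition zo :: "nat \<Rightarrow> (nat \<Rightarrow> bool) \<Rightarrow> (nat \<Rightarrow> bool)" where
  "zo i \<alpha> = (\<lambda>n. if n < i then False else if n = i then True else \<alpha> (n - Suc i))"

definition A01 :: "((nat \<Rightarrow> bool) \<times> (nat \<Rightarrow> bool)) set" where
  "A01 = {((\<lambda>_. False), (\<lambda>_. False))}"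

definition A11 :: "((nat \<Rightarrow> bool) \<times> (nat \<Rightarrow> bool)) set" where
  "A11 = {(zo i \<alpha>, zo i \<beta>) | i \<alpha> \<beta>. True}"

end

theory Submission
  imports Defs
begin

text \<open>Both alternatives are equivalent to a closure condition, and the two conditions are
  complementary. Since a union of open rectangles is open and open rectangles form a basis of the
  second countable space \<open>X \<times> Y\<close>, (a) holds iff no point of \<open>A\<^sub>0\<close> lies in the closure of
  \<open>A\<^sub>1\<close>. Alternative (b) forces \<open>(f 0\<^sup>\<infinity>, g 0\<^sup>\<infinity>) \<in> A\<^sub>0\<close> to be the limit of the points
  \<open>(f (0\<^sup>i1 0\<^sup>\<infinity>), g (0\<^sup>i1 0\<^sup>\<infinity>)) \<in> A\<^sub>1\<close>; conversely, from a sequence \<open>(x\<^sub>i, y\<^sub>i) \<in> A\<^sub>1\<close>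
  converging to \<open>(x, y) \<in> A\<^sub>0\<close> one gets (b) with \<open>f (0\<^sup>i1\<alpha>) = x\<^sub>i\<close>, \<open>f 0\<^sup>\<infinity> = x\<close>, and
  similarly for \<open>g\<close>.\<close>

lemma topspace_cantor_space [simp]: "topspace cantor_space = UNIV"
  by (simp add: cantor_space_def)

lemma openin_cantor_space_coordinate: "openin cantor_space {b. b j = v}"
proof -
  have "openin cantor_space {b \<in> topspace cantor_space. b j \<in> {v}}"
    unfolding cantor_space_def
    by (rule openin_continuous_map_preimage[OF continuous_map_product_projection]) auto
  then show ?thesis by simp
qed

lemma openin_cantor_space_cylinder: "openin cantor_space {b. \<forall>j<N. b j = c j}"
proof (induction N)
  case 0
  then show ?case using openin_topspace[of cantor_space] by simp
next
  case (Suc N)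
  have "{b. \<forall>j<Suc N. b j = c j} = {b. \<forall>j<N. b j = c j} \<inter> {b. b N = c N}"
    by (auto simp: less_Suc_eq)
  then show ?case using openin_Int[OF Suc.IH openin_cantor_space_coordinate] by simp
qed

lemma limitin_zo: "limitin cantor_space (\<lambda>i. zo i \<alpha>) (\<lambda>_. False) sequentially"
  unfolding cantor_space_def limitin_componentwise
proof (intro conjI ballI)
  fix j :: nat
  have "eventually (\<lambda>i. zo i \<alpha> j = False) sequentially"
    unfolding eventually_sequentially by (rule exI[of _ "Suc j"]) (auto simp: zo_def)
  then show "limitin (discrete_topology UNIV) (\<lambda>i. zo i \<alpha> j) False sequentially"
    unfolding limitin_def by (auto elim: eventually_mono)
qed auto

definition first_hit_map :: "(nat \<Rightarrow> 'a) \<Rightarrow> 'a \<Rightarrow> (nat \<Rightarrow> bool) \<Rightarrow> 'a" where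
  "first_hit_map xs x a = (if \<exists>i. a i then xs (LEAST i. a i) else x)"

lemma first_hit_map_zo [simp]: "first_hit_map xs x (zo i \<alpha>) = xs i"
proof -
  have "(LEAST n. zo i \<alpha> n) = i"
    by (rule Least_equality) (auto simp: zo_def split: if_splits)
  moreover have "zo i \<alpha> i" by (simp add: zo_def)
  ultimately show ?thesis by (auto simp: first_hit_map_def)
qed

lemma first_hit_map_False [simp]: "first_hit_map xs x (\<lambda>_. False) = x"
  by (simp add: first_hit_map_def)

lemma first_hit_map_eq_if_agree:
  assumes "a k" and "\<forall>j\<le>k. b j = a j"
  shows "first_hit_map xs x b = first_hit_map xs x a"
proof -
  have "(LEAST i. b i) = (LEAST i. a i)"
  proof (rule Least_equality)
    show "b (LEAST i. a i)"
      using assms LeastI[of a k] Least_le[of a k] by auto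
    show "(LEAST i. a i) \<le> j" if "b j" for j
    proof (cases "j \<le> k")
      case True
      then show ?thesis using that assms by (auto intro: Least_le)
    next
      case False
      then show ?thesis using Least_le[of a k] assms(1) by linarith
    qed
  qed
  then show ?thesis using assms unfolding first_hit_map_def by auto
qed

lemma first_hit_map_in_tail:
  assumes "\<forall>j<N. \<not> b j"
  shows "first_hit_map xs x b \<in> insert x (xs ` {N..})"
proof (cases "\<exists>i. b i")
  case True
  then have "N \<le> (LEAST i. b i)"
    using assms LeastI_ex[of b] by (meson not_le)
  then show ?thesis using True by (simp add: first_hit_map_def)
qed (simp add: first_hit_map_def)

text \<open>Points with a first \<open>1\<close> at position \<open>k\<close> are isolated by the cylinder of length \<open>k + 1\<close>;
  near \<open>0\<^sup>\<infinity>\<close> the map only takes the values \<open>x\<close> and \<open>xs i\<close> with \<open>i\<close> large.\<close>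

lemma continuous_map_first_hit_map:
  fixes xs :: "nat \<Rightarrow> 'a::topological_space"
  assumes lim: "xs \<longlonglongrightarrow> x"
  shows "continuous_map cantor_space euclidean (first_hit_map xs x)"
  unfolding continuous_map_def
proof (intro conjI allI impI)
  fix U :: "'a set"
  assume "openin euclidean U"
  then have "open U" by simp
  let ?P = "{a \<in> topspace cantor_space. first_hit_map xs x a \<in> U}"
  show "openin cantor_space ?P"
  proof (subst openin_subopen, intro ballI)
    fix a assume a: "a \<in> ?P"
    show "\<exists>T. openin cantor_space T \<and> a \<in> T \<and> T \<subseteq> ?P"
    proof (cases "\<exists>i. a i")
      case True
      then obtain k where "a k" by blast
      have "{b. \<forall>j<Suc k. b j = a j} \<subseteq> ?P"
      proof
        fix b assume "b \<in> {b. \<forall>j<Suc k. b j = a j}"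
        then have "first_hit_map xs x b = first_hit_map xs x a"
          by (intro first_hit_map_eq_if_agree[where a = a and k = k, OF \<open>a k\<close>]) (simp add: less_Suc_eq_le)
        then show "b \<in> ?P" using a by simp
      qed
      then show ?thesis using openin_cantor_space_cylinder[of "Suc k" a] by auto
    next
      case False
      then have "first_hit_map xs x a = x" by (simp add: first_hit_map_def)
      then have "x \<in> U" using a by simp
      then have "eventually (\<lambda>i. xs i \<in> U) sequentially"
        using lim \<open>open U\<close> by (simp add: tendsto_def)
      then obtain N where N: "\<And>i. i \<ge> N \<Longrightarrow> xs i \<in> U"
        by (auto simp: eventually_sequentially)
      have "{b. \<forall>j<N. b j = a j} \<subseteq> ?P"
      proof
        fix b assume "b \<in> {b. \<forall>j<N. b j = a j}"
        then have "\<forall>j<N. \<not> b j" using False by auto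
        then have "first_hit_map xs x b \<in> insert x (xs ` {N..})"
          by (rule first_hit_map_in_tail)
        then show "b \<in> ?P" using \<open>x \<in> U\<close> N by auto
      qed
      then show ?thesis using openin_cantor_space_cylinder[of N a] by auto
    qed
  qed
qed auto

lemma open_rectangle_separation_iff_closure:
  fixes A0 A1 :: "('a::second_countable_topology \<times> 'b::second_countable_topology) set"
  shows "(\<exists>\<R>. countable \<R> \<and> (\<forall>W\<in>\<R>. \<exists>U V. open U \<and> open V \<and> W = U \<times> V)
              \<and> A0 \<subseteq> \<Union>\<R> \<and> \<Union>\<R> \<inter> A1 = {})
         \<longleftrightarrow> A0 \<inter> closure A1 = {}"
proof
  assume "\<exists>\<R>. countable \<R> \<and> (\<forall>W\<in>\<R>. \<exists>U V. open U \<and> open V \<and> W = U \<times> V)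
              \<and> A0 \<subseteq> \<Union>\<R> \<and> \<Union>\<R> \<inter> A1 = {}"
  then obtain \<R> where \<R>: "\<forall>W\<in>\<R>. \<exists>U V. open U \<and> open V \<and> W = U \<times> V"
      "A0 \<subseteq> \<Union>\<R>" "\<Union>\<R> \<inter> A1 = {}"
    by (elim exE conjE) assumption
  have "\<forall>W\<in>\<R>. open W" using \<R>(1) by (metis open_Times)
  then have "\<Union>\<R> \<inter> closure A1 = {}"
    using \<R>(3) by (simp add: open_Union open_Int_closure_eq_empty)
  then show "A0 \<inter> closure A1 = {}" using \<R>(2) by blast
next
  assume A0: "A0 \<inter> closure A1 = {}"
  define \<F> where "\<F> = {U \<times> V | U V. open U \<and> open V \<and> U \<times> V \<inter> A1 = {}}"
  have "\<And>W. W \<in> \<F> \<Longrightarrow> open W" unfolding \<F>_def using open_Times by blast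
  then obtain \<R> where \<R>: "\<R> \<subseteq> \<F>" "countable \<R>" "\<Union>\<R> = \<Union>\<F>"
    by (rule Lindelof)
  have "A0 \<subseteq> \<Union>\<F>"
  proof
    fix p assume "p \<in> A0"
    then have "p \<in> - closure A1" using A0 by blast
    then obtain U V where UV: "open U" "open V" "p \<in> U \<times> V" "U \<times> V \<subseteq> - closure A1"
      by (rule open_prod_elim[OF open_Compl[OF closed_closure]])
    then have "U \<times> V \<inter> A1 = {}" using closure_subset[of A1] by blast
    then show "p \<in> \<Union>\<F>" unfolding \<F>_def using UV(1-3) by blast
  qed
  moreover have "\<forall>W\<in>\<R>. \<exists>U V. open U \<and> open V \<and> W = U \<times> V"
  proof
    fix W assume "W \<in> \<R>"
    then have "W \<in> \<F>" using \<R>(1) by blast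
    then obtain U V where "open U" "open V" "W = U \<times> V"
      unfolding \<F>_def by (elim CollectE exE conjE) (rule that)
    then show "\<exists>U V. open U \<and> open V \<and> W = U \<times> V" by (intro exI[of _ U] exI[of _ V]) simp
  qed
  moreover have "\<Union>\<R> \<inter> A1 = {}"
    unfolding \<R>(3) \<F>_def by blast
  ultimately show "\<exists>\<R>. countable \<R> \<and> (\<forall>W\<in>\<R>. \<exists>U V. open U \<and> open V \<and> W = U \<times> V)
              \<and> A0 \<subseteq> \<Union>\<R> \<and> \<Union>\<R> \<inter> A1 = {}"
    using \<R>(2,3) by (intro exI[of _ \<R>]) simp
qed

lemma cantor_reduction_iff_closure:
  fixes A0 A1 :: "('a::first_countable_topology \<times> 'b::first_countable_topology) set"
  shows "(\<exists>f g. continuous_map cantor_space euclidean f \<and> continuous_map cantor_space euclidean g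
              \<and> (\<lambda>(x, y). (f x, g y)) ` A01 \<subseteq> A0 \<and> (\<lambda>(x, y). (f x, g y)) ` A11 \<subseteq> A1)
         \<longleftrightarrow> A0 \<inter> closure A1 \<noteq> {}"
proof
  assume "\<exists>f g. continuous_map cantor_space euclidean f \<and> continuous_map cantor_space euclidean g
              \<and> (\<lambda>(x, y). (f x, g y)) ` A01 \<subseteq> A0 \<and> (\<lambda>(x, y). (f x, g y)) ` A11 \<subseteq> A1"
  then obtain f g where f: "continuous_map cantor_space euclidean f"
    and g: "continuous_map cantor_space euclidean g"
    and "(\<lambda>(x, y). (f x, g y)) ` A01 \<subseteq> A0" "(\<lambda>(x, y). (f x, g y)) ` A11 \<subseteq> A1"
    by blast
  define z :: "nat \<Rightarrow> bool" where "z = (\<lambda>_. False)"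
  have in_A0: "(f z, g z) \<in> A0"
    using \<open>_ ` A01 \<subseteq> A0\<close> unfolding A01_def z_def by auto
  have "(zo i z, zo i z) \<in> A11" for i
    unfolding A11_def by blast
  then have in_A1: "(f (zo i z), g (zo i z)) \<in> A1" for i
    using \<open>_ ` A11 \<subseteq> A1\<close> by force
  have "(\<lambda>i. (f (zo i z), g (zo i z))) \<longlonglongrightarrow> (f z, g z)"
    using continuous_map_limit[OF f limitin_zo] continuous_map_limit[OF g limitin_zo]
    by (intro tendsto_Pair) (simp_all add: o_def z_def)
  then have "(f z, g z) \<in> closure A1"
    by (rule closed_sequentially[OF closed_closure, rotated]) (use in_A1 closure_subset in blast)
  then show "A0 \<inter> closure A1 \<noteq> {}" using in_A0 by blast
next
  assume "A0 \<inter> closure A1 \<noteq> {}"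
  then obtain x y where "(x, y) \<in> A0" "(x, y) \<in> closure A1"
    by auto
  then obtain p where p: "\<And>i. p i \<in> A1" "p \<longlonglongrightarrow> (x, y)"
    unfolding closure_sequential by blast
  let ?f = "first_hit_map (\<lambda>i. fst (p i)) x" and ?g = "first_hit_map (\<lambda>i. snd (p i)) y"
  have "continuous_map cantor_space euclidean ?f" "continuous_map cantor_space euclidean ?g"
    using tendsto_fst[OF p(2)] tendsto_snd[OF p(2)] by (auto intro: continuous_map_first_hit_map)
  moreover have "(\<lambda>(a, b). (?f a, ?g b)) ` A01 \<subseteq> A0"
    using \<open>(x, y) \<in> A0\<close> by (auto simp: A01_def)
  moreover have "(\<lambda>(a, b). (?f a, ?g b)) ` A11 \<subseteq> A1"
    using p(1) by (auto simp: A11_def)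
  ultimately show "\<exists>f g. continuous_map cantor_space euclidean f \<and> continuous_map cantor_space euclidean g
              \<and> (\<lambda>(x, y). (f x, g y)) ` A01 \<subseteq> A0 \<and> (\<lambda>(x, y). (f x, g y)) ` A11 \<subseteq> A1"
    by blast
qed

theorem corollary3p8:
  fixes A0 A1 :: "('a::polish_space \<times> 'b::polish_space) set"
  assumes "A0 \<inter> A1 = {}"
  shows "(\<exists>\<R>. countable \<R> \<and> (\<forall>W\<in>\<R>. \<exists>U V. open U \<and> open V \<and> W = U \<times> V)
              \<and> A0 \<subseteq> \<Union>\<R> \<and> \<Union>\<R> \<inter> A1 = {})
       \<noteq> (\<exists>f g. continuous_map cantor_space euclidean f \<and> continuous_map cantor_space euclidean g
              \<and> (\<lambda>(x, y). (f x, g y)) ` A01 \<subseteq> A0 \<and> (\<lambda>(x, y). (f x, g y)) ` A11 \<subseteq> A1)"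
  unfolding open_rectangle_separation_iff_closure cantor_reduction_iff_closure by simp

end
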